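(* Let $\theta,\lambda$ be cardinals with $\lambda\ge2^\theta$ and let $\varphi\in L^{1,c}_{\lambda^+,\le\theta}$. Then there is a fragment $\mathcal{T}$ of $L^{1,c}_{\lambda^+,\le\theta}$ with $\varphi\in\mathcal{T}$ and $|\mathcal{T}|\le\lambda$.
   Context: $L^{1,c}_{\lambda^+,\le\theta}$ is the smallest class of formulas containing $L_{\theta^+\omega}$ and closed under: (a) $\bigwedge\Phi,\bigvee\Phi$ for sets $\Phi$ of its formulas with $|\Phi|\le\lambda$ and at most $\theta$ free variables altogether; (b) $\forall x$, $\exists x$, $\neg$; (c) (basic splits) if $\overline{x},\overline{y}$ are tuples of variables of length $\le\theta$ and for every $A\subseteq\overline{x}$, $\varphi_A(\overline{x},\overline{y})$ is a formula with free variables in $A\cup\overline{y}$, then $\forall\overline{x}\bigvee_f\bigwedge_n\varphi_{f^{-1}(n)}(\overline{x},\overline{y})$ and $\exists\overline{x}\bigwedge_f\bigvee_n\varphi_{f^{-1}(n)}(\overline{x},\overline{y})$ are formulas ($f$ ranging over functions $\overline{x}\to\omega$); the immediate subformulas of such a basic split are the $\varphi_A$, $A\subseteq\overline{x}$. A fragment is a set of formulas closed under subformulas. *)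

theory Defs
  imports Main
begin

text \<open>Conjunctions/disjunctions are indexed: Conj K F denotes the conjunction
of the set F ` K. SplitAll X Y P is the basic split
forall X. OR_f AND_n P (f^-1 n), and SplitEx X Y P the dual, where P A is the formula
phi_A for A a subset of X (tuples of variables represented by sets of variables).\<close>

datatype ('a, 'v, 'k) form =
    Atom 'a "'v list"
  | Neg "('a, 'v, 'k) form"
  | Conj "'k set" "'k \<Rightarrow> ('a, 'v, 'k) form"
  | Disj "'k set" "'k \<Rightarrow> ('a, 'v, 'k) form"
  | All 'v "('a, 'v, 'k) form"
  | Ex 'v "('a, 'v, 'k) form"
  | SplitAll "'v set" "'v set" "'v set \<Rightarrow> ('a, 'v, 'k) form"
  | SplitEx "'v set" "'v set" "'v set \<Rightarrow> ('a, 'v, 'k) form"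

primrec fv :: "('a, 'v, 'k) form \<Rightarrow> 'v set" where
  "fv (Atom a vs) = set vs"
| "fv (Neg p) = fv p"
| "fv (Conj K F) = (\<Union>k\<in>K. fv (F k))"
| "fv (Disj K F) = (\<Union>k\<in>K. fv (F k))"
| "fv (All x p) = fv p - {x}"
| "fv (Ex x p) = fv p - {x}"
| "fv (SplitAll X Y P) = (\<Union>A\<in>Pow X. fv (P A)) - X"
| "fv (SplitEx X Y P) = (\<Union>A\<in>Pow X. fv (P A)) - X"

primrec isub :: "('a, 'v, 'k) form \<Rightarrow> ('a, 'v, 'k) form set" where
  "isub (Atom a vs) = {}"
| "isub (Neg p) = {p}"
| "isub (Conj K F) = F ` K"
| "isub (Disj K F) = F ` K"
| "isub (All x p) = {p}"
| "isub (Ex x p) = {p}"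
| "isub (SplitAll X Y P) = P ` Pow X"
| "isub (SplitEx X Y P) = P ` Pow X"

text \<open>L_{theta^+ omega}, theta = |T|: conjunctions/disjunctions of at most theta formulas.\<close>
inductive_set Lthetaomega :: "'t set \<Rightarrow> ('a, 'v, 'k) form set" for T :: "'t set" where
  atom: "Atom a vs \<in> Lthetaomega T"
| neg: "p \<in> Lthetaomega T \<Longrightarrow> Neg p \<in> Lthetaomega T"
| all: "p \<in> Lthetaomega T \<Longrightarrow> All x p \<in> Lthetaomega T"
| ex: "p \<in> Lthetaomega T \<Longrightarrow> Ex x p \<in> Lthetaomega T"
| conj: "(\<And>k. k \<in> K \<Longrightarrow> F k \<in> Lthetaomega T) \<Longrightarrow> (card_of (F ` K), card_of T) \<in> ordLeq
         \<Longrightarrow> Conj K F \<in> Lthetaomega T"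
| disj: "(\<And>k. k \<in> K \<Longrightarrow> F k \<in> Lthetaomega T) \<Longrightarrow> (card_of (F ` K), card_of T) \<in> ordLeq
         \<Longrightarrow> Disj K F \<in> Lthetaomega T"

text \<open>L^{1,c}_{lambda^+, <= theta}, theta = |T|, lambda = |L|.\<close>
inductive_set L1c :: "'t set \<Rightarrow> 'l set \<Rightarrow> ('a, 'v, 'k) form set"
  for T :: "'t set" and L :: "'l set" where
  base: "p \<in> Lthetaomega T \<Longrightarrow> p \<in> L1c T L"
| conj: "(\<And>k. k \<in> K \<Longrightarrow> F k \<in> L1c T L) \<Longrightarrow> (card_of (F ` K), card_of L) \<in> ordLeq
         \<Longrightarrow> (card_of (\<Union>k\<in>K. fv (F k)), card_of T) \<in> ordLeq
         \<Longrightarrow> Conj K F \<in> L1c T L"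
| disj: "(\<And>k. k \<in> K \<Longrightarrow> F k \<in> L1c T L) \<Longrightarrow> (card_of (F ` K), card_of L) \<in> ordLeq
         \<Longrightarrow> (card_of (\<Union>k\<in>K. fv (F k)), card_of T) \<in> ordLeq
         \<Longrightarrow> Disj K F \<in> L1c T L"
| neg: "p \<in> L1c T L \<Longrightarrow> Neg p \<in> L1c T L"
| all: "p \<in> L1c T L \<Longrightarrow> All x p \<in> L1c T L"
| ex: "p \<in> L1c T L \<Longrightarrow> Ex x p \<in> L1c T L"
| splitall: "(card_of X, card_of T) \<in> ordLeq \<Longrightarrow> (card_of Y, card_of T) \<in> ordLeq
         \<Longrightarrow> (\<And>A. A \<subseteq> X \<Longrightarrow> P A \<in> L1c T L \<and> fv (P A) \<subseteq> A \<union> Y)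
         \<Longrightarrow> SplitAll X Y P \<in> L1c T L"
| splitex: "(card_of X, card_of T) \<in> ordLeq \<Longrightarrow> (card_of Y, card_of T) \<in> ordLeq
         \<Longrightarrow> (\<And>A. A \<subseteq> X \<Longrightarrow> P A \<in> L1c T L \<and> fv (P A) \<subseteq> A \<union> Y)
         \<Longrightarrow> SplitEx X Y P \<in> L1c T L"

text \<open>A fragment: a set of formulas closed under (immediate, hence all) subformulas.\<close>
definition fragment :: "('a, 'v, 'k) form set \<Rightarrow> bool" where
  "fragment S \<longleftrightarrow> (\<forall>p\<in>S. isub p \<subseteq> S)"

end

theory Submission
  imports Defs
begin

text \<open>The subformula closure of \<open>\<phi>\<close> is the required fragment. Every formula of
\<open>L1c T L\<close> has at most \<open>\<lambda>\<close> immediate subformulas: a conjunction or disjunction by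
definition, and a basic split over a tuple \<open>X\<close> with \<open>|X| \<le> \<theta>\<close> has one for each
\<open>A \<subseteq> X\<close>, hence at most \<open>2\<^sup>\<theta> \<le> \<lambda>\<close>. Since \<open>\<lambda>\<close> is infinite,
induction on formulas bounds the size of the closure by \<open>\<lambda>\<close>.\<close>

unbundle cardinal_syntax

lemma finite_ordLeq_infinite:
  assumes "finite A" and "infinite B"
  shows "|A| \<le>o |B|"
  using assms by (intro ordLess_imp_ordLeq finite_ordLess_infinite)
    (auto simp: Field_card_of card_of_well_order_on)

lemma card_of_Pow_mono:
  assumes "|A| \<le>o |B|"
  shows "|Pow A| \<le>o |Pow B|"
proof -
  obtain f where f: "inj_on f A" "f ` A \<subseteq> B"
    using assms card_of_ordLeq[of A B] by auto
  have "inj_on (image f) (Pow A)"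
    using f(1) by (auto simp: inj_on_def inj_on_image_eq_iff)
  moreover have "image f ` Pow A \<subseteq> Pow B"
    using f(2) by auto
  ultimately show ?thesis
    using card_of_ordLeq[of "Pow A" "Pow B"] by auto
qed

lemma card_of_insert_ordLeq_infinite:
  assumes "infinite B" and "|A| \<le>o |B|"
  shows "|insert a A| \<le>o |B|"
proof -
  have "|{a} \<union> A| \<le>o |B|"
    using assms finite_ordLeq_infinite[of "{a}" B]
    by (intro card_of_Un_ordLeq_infinite_Field) (auto simp: Field_card_of card_of_card_order_on)
  then show ?thesis by simp
qed

lemma form_isub_induct:
  assumes "\<And>p. (\<And>q. q \<in> isub p \<Longrightarrow> P q) \<Longrightarrow> P p"
  shows "P p"
  by (induct p; rule assms; auto)

inductive_set subforms :: "('a, 'v, 'k) form \<Rightarrow> ('a, 'v, 'k) form set" for p where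
  self: "p \<in> subforms p"
| isub: "q \<in> subforms p \<Longrightarrow> r \<in> isub q \<Longrightarrow> r \<in> subforms p"

lemma subforms_trans: "r \<in> subforms q \<Longrightarrow> q \<in> subforms p \<Longrightarrow> r \<in> subforms p"
  by (induct rule: subforms.induct) (auto intro: subforms.isub)

lemma subforms_unfold: "subforms p = insert p (\<Union>q\<in>isub p. subforms q)"
proof
  show "subforms p \<subseteq> insert p (\<Union>q\<in>isub p. subforms q)"
  proof
    fix r assume "r \<in> subforms p"
    then show "r \<in> insert p (\<Union>q\<in>isub p. subforms q)"
      by (induct rule: subforms.induct) (auto intro: subforms.intros)
  qed
  show "insert p (\<Union>q\<in>isub p. subforms q) \<subseteq> subforms p"
    using subforms_trans subforms.intros by blast
qed

lemma fragment_subforms: "fragment (subforms p)"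
  unfolding fragment_def using subforms.isub by blast

lemma card_of_subforms:
  assumes "infinite L" and "\<And>q. q \<in> subforms p \<Longrightarrow> |isub q| \<le>o |L|"
  shows "|subforms p| \<le>o |L|"
  using assms(2)
proof (induct p rule: form_isub_induct)
  case (1 p)
  have "|subforms q| \<le>o |L|" if "q \<in> isub p" for q
    using that 1 subforms_trans subforms.self subforms.isub by metis
  then have "|\<Union>q\<in>isub p. subforms q| \<le>o |L|"
    using assms(1) 1(2)[OF subforms.self] by (intro card_of_UNION_ordLeq_infinite) auto
  then show ?case
    using assms(1) subforms_unfold card_of_insert_ordLeq_infinite by metis
qed

lemma Lthetaomega_isub: "p \<in> Lthetaomega T \<Longrightarrow> q \<in> isub p \<Longrightarrow> q \<in> Lthetaomega T"
  by (induct rule: Lthetaomega.induct) auto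

lemma L1c_isub: "p \<in> L1c T L \<Longrightarrow> q \<in> isub p \<Longrightarrow> q \<in> L1c T L"
  by (induct rule: L1c.induct) (auto dest: Lthetaomega_isub intro: L1c.base)

lemma L1c_subforms:
  assumes "p \<in> L1c T L"
  shows "subforms p \<subseteq> L1c T L"
proof
  fix q assume "q \<in> subforms p"
  then show "q \<in> L1c T L"
    by (induct rule: subforms.induct) (auto intro: assms L1c_isub)
qed

lemma card_of_isub_Lthetaomega:
  assumes "p \<in> Lthetaomega T" and "infinite L" and "|T| \<le>o |L|"
  shows "|isub p| \<le>o |L|"
  using assms(1)
  by cases (auto intro: ordLeq_transitive[OF _ assms(3)] finite_ordLeq_infinite[OF _ assms(2)])

lemma card_of_isub_split:
  assumes "|X| \<le>o |T|"
  shows "|P ` Pow X| \<le>o |Pow T|"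
  using card_of_image card_of_Pow_mono[OF assms] by (rule ordLeq_transitive)

lemma card_of_isub_L1c:
  assumes "p \<in> L1c T L" and "infinite L" and "|Pow T| \<le>o |L|"
  shows "|isub p| \<le>o |L|"
proof -
  have T: "|T| \<le>o |L|"
    using ordLess_imp_ordLeq[OF card_of_Pow] assms(3) by (rule ordLeq_transitive)
  from assms(1) show ?thesis
  proof cases
    case base
    then show ?thesis using card_of_isub_Lthetaomega assms(2) T by blast
  qed (auto intro: finite_ordLeq_infinite[OF _ assms(2)]
      ordLeq_transitive[OF card_of_isub_split assms(3)])
qed

theorem mainTheorem7:
  fixes T :: "'t set" and L :: "'l set" and \<phi> :: "('a, 'v, 'k) form"
  assumes "infinite L"
    and "(card_of (Pow T), card_of L) \<in> ordLeq"
    and "\<phi> \<in> L1c T L"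
  shows "\<exists>S. S \<subseteq> L1c T L \<and> fragment S \<and> \<phi> \<in> S \<and> (card_of S, card_of L) \<in> ordLeq"
proof (intro exI conjI)
  show "subforms \<phi> \<subseteq> L1c T L"
    using assms(3) by (rule L1c_subforms)
  show "fragment (subforms \<phi>)"
    by (rule fragment_subforms)
  show "\<phi> \<in> subforms \<phi>"
    by (rule subforms.self)
  show "|subforms \<phi>| \<le>o |L|"
    using assms L1c_subforms card_of_isub_L1c by (blast intro: card_of_subforms)
qed

end
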